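(* In the setting described in the context, the mapping $\psi^c$ is a monotone $(1-\min\{2\beta,1/2\})\gamma$-CRS with regards to $h$.
   Context: Let $I=\{1,\dots,n\}$ be a set of items, $B$ a positive integer, $[B]=\{1,\dots,B\}$, $[0;B]=\{0,1,\dots,B\}$; for $u,w\in[0;B]^I$, $u\le w$ means coordinatewise. Let $f:[0;B]^I\to\mathbb{R}_{\ge0}$ be monotone and lattice submodular. Each item $i$ has a random state $\Phi(i)\in[B]$, independent across items, with known distribution $p_i(s)=\Pr[\Phi(i)=s]$. Item $i$ in state $s$ has a nonnegative integer cost $c_i(s)$, with $c_i(s)\ge c_i(s')$ whenever $s\ge s'$. $C$ is a positive integer budget and $\mathcal{I}^{out}\subseteq 2^I$ is a downward-closed family. For $S\subseteq I$ and $\phi\in[B]^I$, $\phi_S$ equals $\phi(i)$ on $S$ and $0$ elsewhere; $\overline{f}(S)=\mathbb{E}[f(\Phi_S)]$, $F(\overline{x})=\sum_{U\subseteq I}\prod_{i\in U}\overline{x}(i)\prod_{i\notin U}(1-\overline{x}(i))\overline{f}(U)$, $P_{\mathcal{I}^{out}}=\mathrm{conv}\{\mathbf{1}_S: S\in\mathcal{I}^{out}\}$. A monotone $(\beta,\gamma)$-balanced CRS for $\mathcal{I}^{out}$ is a (possibly randomized) scheme that, for any $\overline{z}\in\beta\cdot P_{\mathcal{I}^{out}}$ and the random set $R$ containing each $i$ independently with probability $\overline{z}(i)$, maps $R$ to $\chi(R)\subseteq R$ with $\chi(R)\in\mathcal{I}^{out}$, such that $\Pr[i\in\chi(R)\mid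 i\in R]\ge\gamma$ for all $i$, and for $i\in R\subseteq R'$, $\Pr[i\in\chi(R)]\ge\Pr[i\in\chi(R')]$. Assume such a scheme $\chi^{io}$ exists for given $\beta,\gamma\in[0,1]$. Problem P1: variables $x(i,t)\ge0$ for $i\in I$, $t\in\{1,\dots,C-c_i(B)\}$, $\overline{x}(i)=\sum_t x(i,t)$; maximize $F(\overline{x})$ subject to $\overline{x}(i)\le1$, $\overline{x}\in P_{\mathcal{I}^{out}}$, and for all $t\in\{1,\dots,C\}$: $\sum_{i\in I}\mathbb{E}[\min\{c_i(\Phi(i)),t\}]\sum_{t'=1}^{t}x(i,t')\le 2t$. Let $y$ be the solution of P1 computed by the stochastic continuous greedy algorithm of Asadpour and Nazerzadeh (2016) with stopping time $l=\min\{\beta,1/4\}$ and step size $\delta=o(n^{-3})$, $\overline{y}(i)=\sum_t y(i,t)$. Distribution $h$: $v\in[0;B]^I$ has independent coordinates with $\Pr[v(i)=j]=p_i(j)\overline{y}(i)$ for $j\in[B]$ and $\Pr[v(i)=0]=1-\overline{y}(i)$; $R(v)=\{i:v(i)\ne0\}$. Mapping $\psi^a$: $\psi^a(v)(i)=v(i)$ if $i\in\chi^{io}(R(v))$ (applying $\chi^{io}$ with $\overline{z}=\overline{y}$), else $0$. Mapping $\psi^b$: for each $i\in R(v)$ independently sample $t(i)\in\{1,\dots,C-c_i(B)\}$ with $\Pr[t(i)=t]=y(i,t)/\overline{y}(i)$; $\psi^b(v)(i)=v(i)$ if $i\in R(v)$ and $\sum_{i'\in R(v)\setminus\{i\},\,t(i')\le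 t(i)}c_{i'}(v(i'))\le t(i)$, else $0$. Mapping $\psi^c$: apply $\psi^a$ and $\psi^b$ to $v$ independently and set $\psi^c(v)(i)=v(i)$ if $\psi^a(v)(i)=v(i)$ and $\psi^b(v)(i)=v(i)$, and $0$ otherwise. An $\alpha$-CRS with regards to $h$ is a (possibly randomized) mapping $\psi$ on $[0;B]^I$ with $\psi(v)(i)\in\{0,v(i)\}$ and $\Pr[\psi(v)(i)=j\mid v(i)=j]\ge\alpha$ for all $i\in I$, $j\in[B]$ (probability over $v\sim h$ and the randomness of $\psi$); it is monotone if for all $u,w$ with $u(i)=w(i)$ and $u\le w$, $\Pr[\psi(u)(i)=u(i)]\ge\Pr[\psi(w)(i)=w(i)]$ (over the randomness of $\psi$ only). *)

theory Defs
  imports "HOL-Probability.Probability"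
begin

(* Items are the elements of a finite type 'i (I = UNIV).  States are naturals;
   [B] = {1..B}, [0;B] = {0..B}. *)

definition downward_closed :: "'i set set \<Rightarrow> bool" where
  "downward_closed F \<longleftrightarrow> (\<forall>S T. S \<in> F \<and> T \<subseteq> S \<longrightarrow> T \<in> F)"

(* P_{I^out} = conv {1_S : S in I^out}, written as convex combinations of the
   finitely many indicator vectors *)
definition polytope :: "'i::finite set set \<Rightarrow> ('i \<Rightarrow> real) set" where
  "polytope F = {z. \<exists>lam :: 'i set \<Rightarrow> real.
      (\<forall>S\<in>F. lam S \<ge> 0) \<and> (\<Sum>S\<in>F. lam S) = 1 \<and>
      (\<forall>i. z i = (\<Sum>S\<in>F. lam S * indicator S i))}"

definition scaled_polytope :: "real \<Rightarrow> 'i::finite set set \<Rightarrow> ('i \<Rightarrow> real) set" where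
  "scaled_polytope b F = {z. \<exists>x\<in>polytope F. \<forall>i. z i = b * x i}"

definition rand_set :: "('i::finite \<Rightarrow> real) \<Rightarrow> 'i set pmf" where
  "rand_set z = map_pmf (\<lambda>b. {i. b i}) (Pi_pmf UNIV False (\<lambda>i. bernoulli_pmf (z i)))"

(* monotone (beta,gamma)-balanced CRS; chi z R is the (random) output on input R
   when the scheme is run for the vector z *)
definition balanced_CRS ::
  "'i::finite set set \<Rightarrow> real \<Rightarrow> real \<Rightarrow> (('i \<Rightarrow> real) \<Rightarrow> 'i set \<Rightarrow> 'i set pmf) \<Rightarrow> bool" where
  "balanced_CRS F b g chi \<longleftrightarrow>
     (\<forall>z \<in> scaled_polytope b F.
        (\<forall>R. \<forall>S \<in> set_pmf (chi z R). S \<subseteq> R \<and> S \<in> F) \<and>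
        (\<forall>i. measure_pmf.prob (bind_pmf (rand_set z) (\<lambda>R. map_pmf (\<lambda>S. (R, S)) (chi z R)))
                 {(R, S). i \<in> R \<and> i \<in> S}
             \<ge> g * measure_pmf.prob (rand_set z) {R. i \<in> R}) \<and>
        (\<forall>i R R'. i \<in> R \<and> R \<subseteq> R' \<longrightarrow>
             measure_pmf.prob (chi z R) {S. i \<in> S} \<ge> measure_pmf.prob (chi z R') {S. i \<in> S}))"

definition tdom :: "('i \<Rightarrow> nat \<Rightarrow> nat) \<Rightarrow> nat \<Rightarrow> nat \<Rightarrow> 'i \<Rightarrow> nat set" where
  "tdom c B C i = {1..C - c i B}"

definition xbar :: "('i \<Rightarrow> nat \<Rightarrow> nat) \<Rightarrow> nat \<Rightarrow> nat \<Rightarrow> ('i \<Rightarrow> nat \<Rightarrow> real) \<Rightarrow> 'i \<Rightarrow> real" where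
  "xbar c B C x i = (\<Sum>t\<in>tdom c B C i. x i t)"

definition P1_feasible ::
  "('i::finite \<Rightarrow> nat pmf) \<Rightarrow> ('i \<Rightarrow> nat \<Rightarrow> nat) \<Rightarrow> nat \<Rightarrow> nat \<Rightarrow> 'i set set
     \<Rightarrow> ('i \<Rightarrow> nat \<Rightarrow> real) \<Rightarrow> bool" where
  "P1_feasible p c B C F x \<longleftrightarrow>
     (\<forall>i. \<forall>t\<in>tdom c B C i. x i t \<ge> 0) \<and>
     (\<forall>i. xbar c B C x i \<le> 1) \<and>
     xbar c B C x \<in> polytope F \<and>
     (\<forall>t\<in>{1..C}. (\<Sum>i\<in>UNIV.
          measure_pmf.expectation (p i) (\<lambda>s. real (min (c i s) t)) *
          (\<Sum>t'\<in>{1..t} \<inter> tdom c B C i. x i t')) \<le> 2 * real t)"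

definition h_dist :: "('i::finite \<Rightarrow> nat pmf) \<Rightarrow> ('i \<Rightarrow> real) \<Rightarrow> ('i \<Rightarrow> nat) pmf" where
  "h_dist p yb = Pi_pmf UNIV 0
     (\<lambda>i. bind_pmf (bernoulli_pmf (yb i)) (\<lambda>b. if b then p i else return_pmf 0))"

definition Rv :: "('i \<Rightarrow> nat) \<Rightarrow> 'i set" where
  "Rv v = {i. v i \<noteq> 0}"

definition psi_a :: "(('i \<Rightarrow> real) \<Rightarrow> 'i set \<Rightarrow> 'i set pmf) \<Rightarrow> ('i \<Rightarrow> real)
     \<Rightarrow> ('i \<Rightarrow> nat) \<Rightarrow> ('i \<Rightarrow> nat) pmf" where
  "psi_a chi yb v = map_pmf (\<lambda>S i. if i \<in> S then v i else 0) (chi yb (Rv v))"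

definition t_dist :: "('i \<Rightarrow> nat \<Rightarrow> nat) \<Rightarrow> nat \<Rightarrow> nat \<Rightarrow> ('i \<Rightarrow> nat \<Rightarrow> real) \<Rightarrow> 'i \<Rightarrow> nat pmf" where
  "t_dist c B C y i = embed_pmf (\<lambda>t. if t \<in> tdom c B C i then y i t / xbar c B C y i else 0)"

definition psi_b :: "('i::finite \<Rightarrow> nat \<Rightarrow> nat) \<Rightarrow> nat \<Rightarrow> nat \<Rightarrow> ('i \<Rightarrow> nat \<Rightarrow> real)
     \<Rightarrow> ('i \<Rightarrow> nat) \<Rightarrow> ('i \<Rightarrow> nat) pmf" where
  "psi_b c B C y v = map_pmf
     (\<lambda>tt i. if i \<in> Rv v \<and>
                 (\<Sum>i'\<in>{i'\<in>Rv v - {i}. tt i' \<le> tt i}. c i' (v i')) \<le> tt i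
             then v i else 0)
     (Pi_pmf (Rv v) 0 (t_dist c B C y))"

definition psi_c :: "(('i::finite \<Rightarrow> real) \<Rightarrow> 'i set \<Rightarrow> 'i set pmf) \<Rightarrow> ('i \<Rightarrow> nat \<Rightarrow> nat)
     \<Rightarrow> nat \<Rightarrow> nat \<Rightarrow> ('i \<Rightarrow> nat \<Rightarrow> real) \<Rightarrow> ('i \<Rightarrow> nat) \<Rightarrow> ('i \<Rightarrow> nat) pmf" where
  "psi_c chi c B C y v = map_pmf
     (\<lambda>(a, b) i. if a i = v i \<and> b i = v i then v i else 0)
     (pair_pmf (psi_a chi (xbar c B C y) v) (psi_b c B C y v))"

definition states0 :: "nat \<Rightarrow> ('i \<Rightarrow> nat) set" where
  "states0 B = {v. \<forall>i. v i \<le> B}"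

definition is_CRS :: "nat \<Rightarrow> ('i \<Rightarrow> nat) pmf \<Rightarrow> (('i \<Rightarrow> nat) \<Rightarrow> ('i \<Rightarrow> nat) pmf) \<Rightarrow> real \<Rightarrow> bool" where
  "is_CRS B h psi alpha \<longleftrightarrow>
     (\<forall>v\<in>states0 B. \<forall>w\<in>set_pmf (psi v). \<forall>i. w i = 0 \<or> w i = v i) \<and>
     (\<forall>i. \<forall>j\<in>{1..B}.
        measure_pmf.prob (bind_pmf h (\<lambda>v. map_pmf (\<lambda>w. (v, w)) (psi v)))
           {(v, w). v i = j \<and> w i = j}
        \<ge> alpha * measure_pmf.prob h {v. v i = j})"

definition monotone_CRS :: "nat \<Rightarrow> (('i \<Rightarrow> nat) \<Rightarrow> ('i \<Rightarrow> nat) pmf) \<Rightarrow> bool" where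
  "monotone_CRS B psi \<longleftrightarrow>
     (\<forall>u\<in>states0 B. \<forall>w\<in>states0 B. \<forall>i. u i = w i \<and> u \<le> w \<longrightarrow>
        measure_pmf.prob (psi u) {x. x i = u i} \<ge> measure_pmf.prob (psi w) {x. x i = w i})"

end

theory Submission
  imports Defs
begin

(* Given v, the mappings psi_a and psi_b act independently, so psi_c keeps an active item i
   with probability qa(v) * qb(v), where qa(v) = Pr[i in chi(R(v))] and qb(v) = Pr[psi_b keeps i].
   Conditioned on v i = j, both factors are decreasing functions of the remaining, independent,
   coordinates of v: qa by the monotonicity of chi, qb because costs grow with the state and more
   active items only make the deadline test of i harder. By Harris' inequality the conditional
   expectation of the product is at least the product of the conditional expectations.
   The first is at least gamma by the guarantee of chi, which applies because
   ybar = l * xbar lies in beta * P for l = min beta (1/4). For the second: if i misses its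
   deadline t(i), the costs of the items started no later than t(i), each capped at t(i), sum to
   at least t(i); by the time constraint of P1 the expected capped sum is at most 2 l t(i), so
   Markov's inequality gives an expected qb of at least 1 - 2 l.
   Monotonicity of psi_c follows from the same two monotonicity properties. *)
section \<open>Expectations of bounded functions on pmfs\<close>

lemma integrable_measure_pmf_bounded:
  fixes f :: "'a \<Rightarrow> real"
  assumes "\<And>x. \<bar>f x\<bar> \<le> K"
  shows "integrable (measure_pmf M) f"
  by (rule measure_pmf.integrable_const_bound[where B=K]) (auto simp: assms)

lemma abs_expectation_le:
  fixes f :: "'a \<Rightarrow> real"
  assumes "\<And>x. \<bar>f x\<bar> \<le> K"
  shows "\<bar>measure_pmf.expectation M f\<bar> \<le> K"
proof -
  have "integrable M f"
    using assms by (rule integrable_measure_pmf_bounded)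
  moreover have "- K \<le> f x" "f x \<le> K" for x
    using assms[of x] by arith+
  ultimately have "- K \<le> measure_pmf.expectation M f" "measure_pmf.expectation M f \<le> K"
    by (auto intro: measure_pmf.integral_ge_const measure_pmf.integral_le_const)
  then show ?thesis
    by (simp add: abs_le_iff)
qed

lemma expectation_mono_bounded:
  fixes f g :: "'a \<Rightarrow> real"
  assumes "\<And>x. \<bar>f x\<bar> \<le> K" "\<And>x. \<bar>g x\<bar> \<le> K" "\<And>x. f x \<le> g x"
  shows "measure_pmf.expectation M f \<le> measure_pmf.expectation M g"
  by (rule integral_mono) (auto intro: integrable_measure_pmf_bounded assms)

lemma expectation_bind_pmf_bounded:
  fixes f :: "'b \<Rightarrow> real"
  assumes "\<And>x. \<bar>f x\<bar> \<le> K"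
  shows "measure_pmf.expectation (bind_pmf M N) f =
         measure_pmf.expectation M (\<lambda>x. measure_pmf.expectation (N x) f)"
  unfolding measure_pmf_bind
  by (rule integral_bind[where K="count_space UNIV" and B=K and B'=1])
     (auto simp: assms measure_pmf.emeasure_space_1 measure_pmf_in_subprob_algebra
       intro: measure_pmf.finite_measure)

lemma prob_bind_pmf:
  "measure_pmf.prob (bind_pmf M N) X = measure_pmf.expectation M (\<lambda>x. measure_pmf.prob (N x) X)"
  using expectation_bind_pmf_bounded[of "indicator X" 1 M N] by (simp add: indicator_def)

lemma expectation_pair_pmf_bounded:
  fixes f :: "'a \<times> 'b \<Rightarrow> real"
  assumes "\<And>x. \<bar>f x\<bar> \<le> K"
  shows "measure_pmf.expectation (pair_pmf A B) f =
         measure_pmf.expectation A (\<lambda>a. measure_pmf.expectation B (\<lambda>b. f (a, b)))"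
  unfolding pair_pmf_def
  by (simp add: expectation_bind_pmf_bounded[OF assms])

lemma expectation_swap_bounded:
  fixes f :: "'a \<Rightarrow> 'b \<Rightarrow> real"
  assumes "\<And>x y. \<bar>f x y\<bar> \<le> K"
  shows "measure_pmf.expectation A (\<lambda>a. measure_pmf.expectation B (f a)) =
         measure_pmf.expectation B (\<lambda>b. measure_pmf.expectation A (\<lambda>a. f a b))"
proof -
  have "measure_pmf.expectation A (\<lambda>a. measure_pmf.expectation B (f a)) =
        measure_pmf.expectation (pair_pmf A B) (\<lambda>(a, b). f a b)"
    by (subst expectation_pair_pmf_bounded[where K=K]) (auto simp: assms)
  also have "\<dots> = measure_pmf.expectation (pair_pmf B A) (\<lambda>(b, a). f a b)"
    by (subst pair_commute_pmf) (simp add: case_prod_unfold)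
  also have "\<dots> = measure_pmf.expectation B (\<lambda>b. measure_pmf.expectation A (\<lambda>a. f a b))"
    by (subst expectation_pair_pmf_bounded[where K=K]) (auto simp: assms)
  finally show ?thesis .
qed

lemma expectation_Pi_pmf_insert:
  fixes f :: "('a \<Rightarrow> 'b) \<Rightarrow> real"
  assumes "finite A" "a \<notin> A" "\<And>x. \<bar>f x\<bar> \<le> K"
  shows "measure_pmf.expectation (Pi_pmf (insert a A) d D) f =
     measure_pmf.expectation (D a) (\<lambda>y. measure_pmf.expectation (Pi_pmf A d D) (\<lambda>x. f (x(a := y))))"
  by (simp add: Pi_pmf_insert[OF assms(1,2)] case_prod_unfold
      expectation_pair_pmf_bounded[where K=K] assms(3))

lemma expectation_Pi_pmf_component:
  fixes f :: "'b \<Rightarrow> real"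
  assumes "finite A" "a \<in> A"
  shows "measure_pmf.expectation (Pi_pmf A d D) (\<lambda>x. f (x a)) = measure_pmf.expectation (D a) f"
proof -
  have "measure_pmf.expectation (Pi_pmf A d D) (\<lambda>x. f (x a)) =
        measure_pmf.expectation (map_pmf (\<lambda>x. x a) (Pi_pmf A d D)) f"
    by simp
  then show ?thesis
    by (simp add: Pi_pmf_component[OF assms(1)] assms(2))
qed

lemma expectation_Pi_pmf_two_components:
  fixes f :: "'b \<Rightarrow> 'b \<Rightarrow> real"
  assumes "finite A" "i \<in> A" "k \<in> A" "k \<noteq> i" "\<And>x y. \<bar>f x y\<bar> \<le> K"
  shows "measure_pmf.expectation (Pi_pmf A d D) (\<lambda>x. f (x k) (x i)) =
         measure_pmf.expectation (D i) (\<lambda>t. measure_pmf.expectation (D k) (\<lambda>s. f s t))"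
proof -
  have "measure_pmf.expectation (Pi_pmf A d D) (\<lambda>x. f (x k) (x i)) =
      measure_pmf.expectation (D i) (\<lambda>t. measure_pmf.expectation (Pi_pmf (A - {i}) d D) (\<lambda>x. f (x k) t))"
    using expectation_Pi_pmf_insert[where A="A - {i}" and a=i and K=K and f="\<lambda>x. f (x k) (x i)"] assms
    by (simp add: insert_absorb)
  also have "\<dots> = measure_pmf.expectation (D i) (\<lambda>t. measure_pmf.expectation (D k) (\<lambda>s. f s t))"
  proof (rule Bochner_Integration.integral_cong[OF refl])
    fix t
    show "measure_pmf.expectation (Pi_pmf (A - {i}) d D) (\<lambda>x. f (x k) t) =
          measure_pmf.expectation (D k) (\<lambda>s. f s t)"
      using expectation_Pi_pmf_component[where f="\<lambda>s. f s t" and A="A - {i}" and a=k] assms by simp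
  qed
  finally show ?thesis .
qed

lemma expectation_Pi_pmf_condition_component:
  fixes f g :: "('a \<Rightarrow> 'b) \<Rightarrow> real"
  assumes "finite A" "i \<in> A" "\<And>x. \<bar>g x\<bar> \<le> K"
    and "\<And>x y. P y \<Longrightarrow> f (x(i := y)) = g x"
  shows "measure_pmf.expectation (Pi_pmf A d D) (\<lambda>x. if P (x i) then f x else 0) =
         measure_pmf.prob (D i) {y. P y} * measure_pmf.expectation (Pi_pmf (A - {i}) d D) g"
proof -
  have "0 \<le> K" by (rule order_trans[OF abs_ge_zero assms(3)])
  have "\<bar>if P (x i) then f x else 0\<bar> \<le> K" for x
    using assms(3)[of x] assms(4)[of "x i" x] \<open>0 \<le> K\<close> by simp
  then have "measure_pmf.expectation (Pi_pmf A d D) (\<lambda>x. if P (x i) then f x else 0) =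
      measure_pmf.expectation (D i) (\<lambda>y. measure_pmf.expectation (Pi_pmf (A - {i}) d D)
        (\<lambda>x. if P y then f (x(i := y)) else 0))"
    using expectation_Pi_pmf_insert[where A="A - {i}" and a=i and K=K and f="\<lambda>x. if P (x i) then f x else 0"]
      assms(1,2)
    by (simp add: insert_absorb)
  also have "\<dots> = measure_pmf.expectation (D i) (\<lambda>y. indicator {y. P y} y *
      measure_pmf.expectation (Pi_pmf (A - {i}) d D) g)"
    using assms(4) by (intro Bochner_Integration.integral_cong) (simp_all add: indicator_def)
  finally show ?thesis
    by simp
qed

section \<open>Harris' inequality for product pmfs\<close>

lemma chebyshev_expectation_antimono:
  fixes f g :: "'b::linorder \<Rightarrow> real"
  assumes bounded: "\<And>x. \<bar>f x\<bar> \<le> K" "\<And>x. \<bar>g x\<bar> \<le> K"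
    and "antimono f" "antimono g"
  shows "measure_pmf.expectation M f * measure_pmf.expectation M g
         \<le> measure_pmf.expectation M (\<lambda>x. f x * g x)"
proof -
  let ?E = "measure_pmf.expectation M"
  have "0 \<le> K" by (rule order_trans[OF abs_ge_zero bounded(1)])
  have fg: "\<bar>f x * g y\<bar> \<le> K * K" for x y
    unfolding abs_mult using bounded by (intro mult_mono) (auto simp: \<open>0 \<le> K\<close>)
  have int: "integrable M f" "integrable M g" "integrable M (\<lambda>x. f x * g x)"
    by (rule integrable_measure_pmf_bounded, rule bounded fg)+
  have same_sign: "0 \<le> (f x - f y) * (g x - g y)" for x y
  proof (cases "x \<le> y")
    case True
    then show ?thesis
      using antimonoD[OF assms(3) True] antimonoD[OF assms(4) True] by (simp add: mult_nonneg_nonneg)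
  next
    case False
    then have "y \<le> x" by simp
    then show ?thesis
      using antimonoD[OF assms(3) \<open>y \<le> x\<close>] antimonoD[OF assms(4) \<open>y \<le> x\<close>]
      by (simp add: mult_nonpos_nonpos)
  qed
  have "0 \<le> ?E (\<lambda>x. ?E (\<lambda>y. (f x - f y) * (g x - g y)))"
    by (intro integral_nonneg_AE AE_I2 same_sign)
  also have "\<dots> = ?E (\<lambda>x. f x * g x - f x * ?E g - g x * ?E f + ?E (\<lambda>y. f y * g y))"
  proof (rule Bochner_Integration.integral_cong[OF refl])
    fix x
    have "?E (\<lambda>y. (f x - f y) * (g x - g y)) = ?E (\<lambda>y. f x * g x - f x * g y - g x * f y + f y * g y)"
      by (simp add: algebra_simps)
    also have "\<dots> = f x * g x - f x * ?E g - g x * ?E f + ?E (\<lambda>y. f y * g y)"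
      using int by (simp add: integral_add integral_diff)
    finally show "?E (\<lambda>y. (f x - f y) * (g x - g y)) = f x * g x - f x * ?E g - g x * ?E f + ?E (\<lambda>y. f y * g y)" .
  qed
  also have "\<dots> = 2 * (?E (\<lambda>x. f x * g x) - ?E f * ?E g)"
    using int by (simp add: integral_add integral_diff algebra_simps)
  finally show ?thesis by simp
qed

lemma fun_upd_mono_le:
  fixes f g :: "'a \<Rightarrow> 'b::order"
  assumes "f \<le> g" "x \<le> y"
  shows "f(a := x) \<le> g(a := y)"
  using assms by (auto simp: le_fun_def)

lemma antimono_fun_upd:
  fixes h :: "('a \<Rightarrow> 'b::order) \<Rightarrow> 'c::order"
  assumes "antimono h"
  shows "antimono (\<lambda>x. h (x(a := y)))"
proof (rule antimonoI)
  fix x x' :: "'a \<Rightarrow> 'b" assume "x \<le> x'"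
  then show "h (x'(a := y)) \<le> h (x(a := y))"
    by (intro antimonoD[OF assms] fun_upd_mono_le) simp_all
qed

lemma antimono_expectation_fun_upd:
  fixes h :: "('a \<Rightarrow> 'b::order) \<Rightarrow> real"
  assumes "antimono h" "\<And>x. \<bar>h x\<bar> \<le> K"
  shows "antimono (\<lambda>y. measure_pmf.expectation M (\<lambda>x. h (x(a := y))))"
proof (rule antimonoI)
  fix y y' :: 'b assume "y \<le> y'"
  then have "h (x(a := y')) \<le> h (x(a := y))" for x
    by (intro antimonoD[OF assms(1)] fun_upd_mono_le) simp_all
  then show "measure_pmf.expectation M (\<lambda>x. h (x(a := y'))) \<le> measure_pmf.expectation M (\<lambda>x. h (x(a := y)))"
    using assms(2) by (intro expectation_mono_bounded[where K=K])
qed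

lemma harris_inequality_Pi_pmf:
  fixes D :: "'a \<Rightarrow> 'b::linorder pmf" and f g :: "('a \<Rightarrow> 'b) \<Rightarrow> real"
  assumes "finite A" "\<And>x. \<bar>f x\<bar> \<le> K" "\<And>x. \<bar>g x\<bar> \<le> K" "antimono f" "antimono g"
  shows "measure_pmf.expectation (Pi_pmf A d D) f * measure_pmf.expectation (Pi_pmf A d D) g
         \<le> measure_pmf.expectation (Pi_pmf A d D) (\<lambda>x. f x * g x)"
  using assms(1-5)
proof (induction A arbitrary: f g rule: finite_induct)
  case empty
  then show ?case by simp
next
  case (insert a A f g)
  let ?E = "measure_pmf.expectation (Pi_pmf A d D)"
  let ?Ea = "measure_pmf.expectation (D a)"
  define F where "F = (\<lambda>y. ?E (\<lambda>x. f (x(a := y))))"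
  define G where "G = (\<lambda>y. ?E (\<lambda>x. g (x(a := y))))"
  define H where "H = (\<lambda>y. ?E (\<lambda>x. f (x(a := y)) * g (x(a := y))))"
  have "0 \<le> K" by (rule order_trans[OF abs_ge_zero insert.prems(1)])
  have fg: "\<bar>f x * g x\<bar> \<le> K * K" for x
    unfolding abs_mult using insert.prems(1,2) by (intro mult_mono) (auto simp: \<open>0 \<le> K\<close>)
  have FGH_bounded: "\<bar>F y\<bar> \<le> K" "\<bar>G y\<bar> \<le> K" "\<bar>H y\<bar> \<le> K * K" for y
    unfolding F_def G_def H_def using insert.prems(1,2) fg by (auto intro: abs_expectation_le)
  have FG_bounded: "\<bar>F y * G y\<bar> \<le> K * K" for y
    unfolding abs_mult using FGH_bounded by (intro mult_mono) (auto simp: \<open>0 \<le> K\<close>)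
  have "antimono F" "antimono G"
    unfolding F_def G_def using insert.prems by (auto intro: antimono_expectation_fun_upd)
  have FGH: "F y * G y \<le> H y" for y
    unfolding F_def G_def H_def using insert.prems by (intro insert.IH antimono_fun_upd)
  have "?Ea F * ?Ea G \<le> ?Ea (\<lambda>y. F y * G y)"
    using FGH_bounded \<open>antimono F\<close> \<open>antimono G\<close> by (intro chebyshev_expectation_antimono)
  also have "\<dots> \<le> ?Ea H"
    using FG_bounded FGH_bounded FGH by (intro expectation_mono_bounded[where K="K * K"])
  finally have calc: "?Ea F * ?Ea G \<le> ?Ea H" .
  have insert_eq: "measure_pmf.expectation (Pi_pmf (insert a A) d D) h = ?Ea (\<lambda>y. ?E (\<lambda>x. h (x(a := y))))"
    if "\<And>x. \<bar>h x\<bar> \<le> K'" for h :: "('a \<Rightarrow> 'b) \<Rightarrow> real" and K'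
    using insert.hyps that by (rule expectation_Pi_pmf_insert)
  show ?case
    unfolding insert_eq[OF insert.prems(1)] insert_eq[OF insert.prems(2)] insert_eq[OF fg]
    using calc unfolding F_def G_def H_def .
qed

definition item_pmf :: "nat pmf \<Rightarrow> real \<Rightarrow> nat pmf" where
  "item_pmf q r = bind_pmf (bernoulli_pmf r) (\<lambda>b. if b then q else return_pmf 0)"

lemma h_dist_eq_Pi_item_pmf: "h_dist p yb = Pi_pmf UNIV 0 (\<lambda>i. item_pmf (p i) (yb i))"
  by (simp add: h_dist_def item_pmf_def)

lemma set_pmf_item_pmf_subset: "set_pmf (item_pmf q r) \<subseteq> insert 0 (set_pmf q)"
  by (auto simp: item_pmf_def split: if_splits)

lemma pmf_item_pmf_nonzero:
  assumes "0 \<le> r" "r \<le> 1" "j \<noteq> 0"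
  shows "pmf (item_pmf q r) j = r * pmf q j"
  using assms by (simp add: item_pmf_def pmf_bind)

lemma expectation_item_pmf:
  fixes g :: "nat \<Rightarrow> real"
  assumes "0 \<le> r" "r \<le> 1" "\<And>s. \<bar>g s\<bar> \<le> K"
  shows "measure_pmf.expectation (item_pmf q r) g = r * measure_pmf.expectation q g + (1 - r) * g 0"
  unfolding item_pmf_def using assms by (simp add: expectation_bind_pmf_bounded[where K=K])

lemma map_pmf_nonzero_item_pmf:
  assumes "0 \<notin> set_pmf q" "0 \<le> r" "r \<le> 1"
  shows "map_pmf (\<lambda>n. n \<noteq> 0) (item_pmf q r) = bernoulli_pmf r"
proof -
  have "map_pmf (\<lambda>n. n \<noteq> 0) q = return_pmf True"
    using assms(1) by (subst map_pmf_eq_return_pmf_iff) (auto intro: gr0I)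
  then have "map_pmf (\<lambda>n. n \<noteq> 0) (item_pmf q r) = bind_pmf (bernoulli_pmf r) return_pmf"
    unfolding item_pmf_def map_bind_pmf by (intro bind_pmf_cong) auto
  then show ?thesis
    by (simp add: bind_return_pmf')
qed

lemma prob_item_pmf_nonzero:
  assumes "0 \<notin> set_pmf q" "0 \<le> r" "r \<le> 1"
  shows "measure_pmf.prob (item_pmf q r) {y. y \<noteq> 0} = r"
proof -
  have "measure_pmf.prob (item_pmf q r) {y. y \<noteq> 0} =
        measure_pmf.prob (map_pmf (\<lambda>n. n \<noteq> 0) (item_pmf q r)) {True}"
    by (simp add: vimage_def)
  then show ?thesis
    using map_pmf_nonzero_item_pmf[OF assms] assms by (simp add: measure_pmf_single)
qed

lemma prob_h_dist_component:
  "measure_pmf.prob (h_dist p r) {v. P (v i)} = measure_pmf.prob (item_pmf (p i) (r i)) {y. P y}"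
proof -
  have "measure_pmf.prob (h_dist p r) {v. P (v i)} =
        measure_pmf.prob (map_pmf (\<lambda>v. v i) (h_dist p r)) {y. P y}"
    by (simp add: vimage_def)
  then show ?thesis
    by (simp add: h_dist_eq_Pi_item_pmf Pi_pmf_component)
qed

lemma rand_set_eq_map_Rv:
  fixes p :: "'i::finite \<Rightarrow> nat pmf"
  assumes "\<And>i. 0 \<notin> set_pmf (p i)" "\<And>i. 0 \<le> yb i" "\<And>i. yb i \<le> 1"
  shows "rand_set yb = map_pmf Rv (h_dist p yb)"
proof -
  have "Pi_pmf UNIV False (\<lambda>i. bernoulli_pmf (yb i)) =
        Pi_pmf UNIV False (\<lambda>i. map_pmf (\<lambda>n. n \<noteq> 0) (item_pmf (p i) (yb i)))"
    by (intro Pi_pmf_cong refl map_pmf_nonzero_item_pmf[symmetric] assms)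
  also have "\<dots> = map_pmf (\<lambda>v. (\<lambda>n. n \<noteq> 0) \<circ> v) (Pi_pmf UNIV 0 (\<lambda>i. item_pmf (p i) (yb i)))"
    by (rule Pi_pmf_map) auto
  finally show ?thesis
    unfolding rand_set_def h_dist_eq_Pi_item_pmf by (simp add: map_pmf_comp o_def Rv_def[abs_def])
qed

lemma Rv_mono:
  assumes "u \<le> w"
  shows "Rv u \<subseteq> Rv w"
proof
  fix k assume "k \<in> Rv u"
  moreover have "u k \<le> w k"
    using assms by (simp add: le_fun_def)
  ultimately show "k \<in> Rv w"
    by (auto simp: Rv_def)
qed

lemma xbar_nonneg:
  assumes "\<forall>t\<in>tdom c B C k. 0 \<le> y k t"
  shows "0 \<le> xbar c B C y k"
  using assms unfolding xbar_def by (simp add: sum_nonneg)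

lemma pmf_t_dist:
  assumes "0 < xbar c B C y k" "\<forall>t\<in>tdom c B C k. 0 \<le> y k t"
  shows "pmf (t_dist c B C y k) t = (if t \<in> tdom c B C k then y k t / xbar c B C y k else 0)"
proof -
  let ?f = "\<lambda>t. if t \<in> tdom c B C k then y k t / xbar c B C y k else 0"
  have nonneg: "0 \<le> ?f t" for t
    using assms by auto
  have "(\<integral>\<^sup>+t. ennreal (?f t) \<partial>count_space UNIV) = (\<Sum>t\<in>tdom c B C k. ennreal (?f t))"
    by (rule nn_integral_count_space') (auto simp: tdom_def)
  also have "\<dots> = ennreal (\<Sum>t\<in>tdom c B C k. ?f t)"
    using nonneg by (intro sum_ennreal) blast
  also have "(\<Sum>t\<in>tdom c B C k. ?f t) = (\<Sum>t\<in>tdom c B C k. y k t) / xbar c B C y k"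
    by (simp add: sum_divide_distrib)
  also have "\<dots> = 1"
    using assms(1) by (simp add: xbar_def)
  finally show ?thesis
    unfolding t_dist_def using nonneg by (subst pmf_embed_pmf) simp_all
qed

lemma set_pmf_t_dist_subset:
  assumes "0 < xbar c B C y k" "\<forall>t\<in>tdom c B C k. 0 \<le> y k t"
  shows "set_pmf (t_dist c B C y k) \<subseteq> tdom c B C k"
  using pmf_t_dist[OF assms] by (auto simp: set_pmf_eq)

(* t_dist is a junk distribution when xbar = 0, but then both sides vanish *)
lemma xbar_mult_prob_t_dist_atMost:
  assumes "\<forall>t\<in>tdom c B C k. 0 \<le> y k t"
  shows "xbar c B C y k * measure_pmf.prob (t_dist c B C y k) {..t} = (\<Sum>t'\<in>{1..t} \<inter> tdom c B C k. y k t')"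
proof (cases "xbar c B C y k = 0")
  case True
  moreover have "finite (tdom c B C k)"
    by (simp add: tdom_def)
  ultimately have "\<forall>t'\<in>tdom c B C k. y k t' = 0"
    using sum_nonneg_eq_0_iff[of "tdom c B C k" "y k"] assms unfolding xbar_def by blast
  then show ?thesis
    using True by simp
next
  case False
  then have pos: "0 < xbar c B C y k"
    using xbar_nonneg[where y=y and k=k, OF assms] by simp
  have "measure_pmf.prob (t_dist c B C y k) {..t} = (\<Sum>t'\<in>{..t}. pmf (t_dist c B C y k) t')"
    by (simp add: measure_measure_pmf_finite)
  also have "\<dots> = (\<Sum>t'\<in>{..t} \<inter> tdom c B C k. y k t' / xbar c B C y k)"
    using pmf_t_dist[OF pos assms] by (simp add: sum.inter_restrict)
  also have "{..t} \<inter> tdom c B C k = {1..t} \<inter> tdom c B C k"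
    by (auto simp: tdom_def)
  finally show ?thesis
    using pos by (simp add: sum_divide_distrib[symmetric])
qed

section \<open>The deadline test of psi_b\<close>

definition meets_deadline :: "('i \<Rightarrow> nat \<Rightarrow> nat) \<Rightarrow> ('i \<Rightarrow> nat) \<Rightarrow> 'i \<Rightarrow> ('i \<Rightarrow> nat) \<Rightarrow> bool" where
  "meets_deadline c v i tt \<longleftrightarrow> (\<Sum>i'\<in>{i'\<in>Rv v - {i}. tt i' \<le> tt i}. c i' (v i')) \<le> tt i"

lemma prob_psi_c_keeps:
  fixes v :: "'i::finite \<Rightarrow> nat"
  assumes "v i \<noteq> 0"
  shows "measure_pmf.prob (psi_c chi c B C y v) {w. w i = v i} =
     measure_pmf.prob (chi (xbar c B C y) (Rv v)) {S. i \<in> S} *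
     measure_pmf.prob (Pi_pmf UNIV 0 (t_dist c B C y)) {tt. meets_deadline c v i tt}"
proof -
  have i: "i \<in> Rv v" using assms by (simp add: Rv_def)
  have "measure_pmf.prob (psi_c chi c B C y v) {w. w i = v i} =
    measure_pmf.prob (pair_pmf (psi_a chi (xbar c B C y) v) (psi_b c B C y v))
       ({a. a i = v i} \<times> {b. b i = v i})"
    unfolding psi_c_def measure_map_pmf
    by (rule arg_cong[where f="measure_pmf.prob _"]) (auto simp: assms split: if_splits)
  also have "\<dots> = measure_pmf.prob (psi_a chi (xbar c B C y) v) {a. a i = v i} *
                  measure_pmf.prob (psi_b c B C y v) {b. b i = v i}"
    by (rule measure_pmf_prob_product) (rule countableI_type)+
  also have "measure_pmf.prob (psi_a chi (xbar c B C y) v) {a. a i = v i} =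
      measure_pmf.prob (chi (xbar c B C y) (Rv v)) {S. i \<in> S}"
    unfolding psi_a_def measure_map_pmf
    by (rule arg_cong[where f="measure_pmf.prob _"]) (auto simp: assms)
  also have "measure_pmf.prob (psi_b c B C y v) {b. b i = v i} =
      measure_pmf.prob (Pi_pmf (Rv v) 0 (t_dist c B C y)) {tt. meets_deadline c v i tt}"
    unfolding psi_b_def measure_map_pmf meets_deadline_def
    by (rule arg_cong[where f="measure_pmf.prob _"]) (auto simp: assms i)
  also have "\<dots> = measure_pmf.prob (Pi_pmf UNIV 0 (t_dist c B C y))
      {tt. meets_deadline c v i (\<lambda>k. if k \<in> Rv v then tt k else 0)}"
    by (subst Pi_pmf_subset[of UNIV "Rv v"]) (auto simp: measure_map_pmf vimage_def)
  also have "{tt. meets_deadline c v i (\<lambda>k. if k \<in> Rv v then tt k else 0)} = {tt. meets_deadline c v i tt}"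
    using i unfolding meets_deadline_def by (intro Collect_cong arg_cong2[where f="(\<le>)"] sum.cong) auto
  finally show ?thesis .
qed

lemma meets_deadline_antimono:
  fixes u w :: "'i::finite \<Rightarrow> nat"
  assumes cmono: "\<forall>i. \<forall>s\<in>{1..B}. \<forall>s'\<in>{1..B}. s' \<le> s \<longrightarrow> c i s' \<le> c i s"
    and "u \<le> w" "\<And>k. w k \<le> B" "meets_deadline c w i tt"
  shows "meets_deadline c u i tt"
proof -
  have "Rv u \<subseteq> Rv w"
    using \<open>u \<le> w\<close> by (rule Rv_mono)
  have "(\<Sum>k\<in>{k\<in>Rv u - {i}. tt k \<le> tt i}. c k (u k)) \<le> (\<Sum>k\<in>{k\<in>Rv u - {i}. tt k \<le> tt i}. c k (w k))"
  proof (rule sum_mono)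
    fix k assume "k \<in> {k\<in>Rv u - {i}. tt k \<le> tt i}"
    then have "1 \<le> u k" "u k \<le> w k"
      using \<open>u \<le> w\<close> by (auto simp: Rv_def le_fun_def)
    then show "c k (u k) \<le> c k (w k)"
      using cmono assms(3)[of k] by auto
  qed
  also have "\<dots> \<le> (\<Sum>k\<in>{k\<in>Rv w - {i}. tt k \<le> tt i}. c k (w k))"
    using \<open>Rv u \<subseteq> Rv w\<close> by (intro sum_mono2) auto
  also have "\<dots> \<le> tt i"
    using assms(4) by (simp add: meets_deadline_def)
  finally show ?thesis
    by (simp add: meets_deadline_def)
qed

lemma sum_truncated_ratio_ge_one:
  fixes g :: "'a \<Rightarrow> nat"
  assumes "finite S" "0 < t" "t < sum g S"
  shows "1 \<le> (\<Sum>k\<in>S. real (min (g k) t) / real t)"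
proof -
  have "t \<le> (\<Sum>k\<in>S. min (g k) t)"
  proof (cases "\<exists>k\<in>S. t \<le> g k")
    case True
    then obtain k where "k \<in> S" "t \<le> g k" by blast
    then have "min (g k) t = t" by simp
    then show ?thesis
      using member_le_sum[OF \<open>k \<in> S\<close>, of "\<lambda>k. min (g k) t"] assms(1) by simp
  next
    case False
    then have "(\<Sum>k\<in>S. min (g k) t) = sum g S"
      by (intro sum.cong) auto
    then show ?thesis
      using assms(3) by simp
  qed
  then have "real t \<le> (\<Sum>k\<in>S. real (min (g k) t))"
    by (metis of_nat_le_iff of_nat_sum)
  then show ?thesis
    using assms(2) by (simp add: sum_divide_distrib[symmetric])
qed

definition deadline_share :: "('i \<Rightarrow> nat \<Rightarrow> nat) \<Rightarrow> 'i \<Rightarrow> 'i \<Rightarrow> nat \<Rightarrow> ('i \<Rightarrow> nat) \<Rightarrow> real" where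
  "deadline_share c i k s tt =
     (if s \<noteq> 0 \<and> tt k \<le> tt i then real (min (c k s) (tt i)) / real (tt i) else 0)"

lemma deadline_share_bounds: "0 \<le> deadline_share c i k s tt" "deadline_share c i k s tt \<le> 1"
  by (auto simp: deadline_share_def divide_le_eq_1 simp del: of_nat_min)

lemma indicator_not_meets_deadline_le:
  fixes v tt :: "'i::finite \<Rightarrow> nat"
  assumes "0 < tt i"
  shows "indicator {tt. \<not> meets_deadline c v i tt} tt \<le> (\<Sum>k\<in>UNIV - {i}. deadline_share c i k (v k) tt)"
proof (cases "meets_deadline c v i tt")
  case True
  have "0 \<le> (\<Sum>k\<in>UNIV - {i}. deadline_share c i k (v k) tt)"
    by (rule sum_nonneg) (rule deadline_share_bounds(1))
  then show ?thesis
    using True by simp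
next
  case False
  let ?S = "{k\<in>Rv v - {i}. tt k \<le> tt i}"
  have "1 \<le> (\<Sum>k\<in>?S. real (min (c k (v k)) (tt i)) / real (tt i))"
    using False assms by (intro sum_truncated_ratio_ge_one) (auto simp: meets_deadline_def)
  also have "\<dots> = (\<Sum>k\<in>UNIV - {i}. deadline_share c i k (v k) tt)"
    unfolding deadline_share_def by (subst sum.inter_filter[symmetric]) (auto simp: Rv_def intro!: sum.cong)
  finally show ?thesis
    using False by simp
qed

lemma prob_meets_deadline_ge:
  fixes T :: "'i::finite \<Rightarrow> nat pmf"
  assumes "0 \<notin> set_pmf (T i)"
  shows "1 - (\<Sum>k\<in>UNIV - {i}. measure_pmf.expectation (Pi_pmf UNIV 0 T) (deadline_share c i k (v k)))
         \<le> measure_pmf.prob (Pi_pmf UNIV 0 T) {tt. meets_deadline c v i tt}"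
proof -
  let ?P = "Pi_pmf UNIV 0 T"
  have share_bounded: "\<bar>deadline_share c i k s tt\<bar> \<le> 1" for k s tt
    using deadline_share_bounds[of c i k s tt] by simp
  have "AE tt in ?P. 0 < tt i"
    using assms by (auto simp: AE_measure_pmf_iff set_Pi_pmf PiE_dflt_def) (metis gr0I)
  have "measure_pmf.prob ?P {tt. \<not> meets_deadline c v i tt} =
        measure_pmf.expectation ?P (indicator {tt. \<not> meets_deadline c v i tt})"
    by simp
  also have "\<dots> \<le> measure_pmf.expectation ?P (\<lambda>tt. \<Sum>k\<in>UNIV - {i}. deadline_share c i k (v k) tt)"
  proof (rule integral_mono_AE)
    show "integrable ?P (indicator {tt. \<not> meets_deadline c v i tt} :: _ \<Rightarrow> real)"
      by (rule integrable_measure_pmf_bounded[where K=1]) simp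
    show "integrable ?P (\<lambda>tt. \<Sum>k\<in>UNIV - {i}. deadline_share c i k (v k) tt)"
      by (intro Bochner_Integration.integrable_sum integrable_measure_pmf_bounded[where K=1] share_bounded)
    show "AE tt in ?P. indicator {tt. \<not> meets_deadline c v i tt} tt \<le>
        (\<Sum>k\<in>UNIV - {i}. deadline_share c i k (v k) tt)"
      using \<open>AE tt in ?P. 0 < tt i\<close> by eventually_elim (rule indicator_not_meets_deadline_le)
  qed
  also have "\<dots> = (\<Sum>k\<in>UNIV - {i}. measure_pmf.expectation ?P (deadline_share c i k (v k)))"
    by (intro Bochner_Integration.integral_sum integrable_measure_pmf_bounded[where K=1] share_bounded)
  finally show ?thesis
    using measure_pmf.prob_compl[of "{tt. meets_deadline c v i tt}" ?P]
    by (simp add: Compl_eq_Diff_UNIV[symmetric] Collect_neg_eq)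
qed

lemma expectation_deadline_share_Pi_pmf:
  fixes T :: "'i::finite \<Rightarrow> nat pmf"
  assumes "k \<noteq> i"
  shows "measure_pmf.expectation (Pi_pmf UNIV 0 T) (deadline_share c i k s) =
    measure_pmf.expectation (T i)
      (\<lambda>t. (if s \<noteq> 0 then real (min (c k s) t) / real t else 0) * measure_pmf.prob (T k) {..t})"
proof -
  define m where "m t = (if s \<noteq> 0 then real (min (c k s) t) / real t else 0)" for t
  have "deadline_share c i k s = (\<lambda>tt. m (tt i) * indicator {..tt i} (tt k))"
    by (auto simp: fun_eq_iff deadline_share_def m_def)
  moreover have "\<bar>m t * indicator {..t} t'\<bar> \<le> 1" for t t'
    by (auto simp: m_def indicator_def divide_le_eq_1 simp del: of_nat_min)
  ultimately have "measure_pmf.expectation (Pi_pmf UNIV 0 T) (deadline_share c i k s) =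
      measure_pmf.expectation (T i) (\<lambda>t. measure_pmf.expectation (T k) (\<lambda>t'. m t * indicator {..t} t'))"
    using expectation_Pi_pmf_two_components[where A=UNIV and i=i and k=k and K=1 and d=0 and D=T
        and f="\<lambda>t' t. m t * indicator {..t} t'"] assms
    by simp
  then show ?thesis
    by (simp add: m_def)
qed

lemma expectation_deadline_share:
  fixes p :: "'i::finite \<Rightarrow> nat pmf" and i k :: 'i
  assumes "k \<noteq> i" "0 \<notin> set_pmf (p k)" "\<forall>t\<in>tdom c B C k. 0 \<le> y k t" "xbar c B C y k \<le> 1"
  shows "measure_pmf.expectation (item_pmf (p k) (xbar c B C y k))
           (\<lambda>s. measure_pmf.expectation (Pi_pmf UNIV 0 (t_dist c B C y)) (deadline_share c i k s)) =
         measure_pmf.expectation (t_dist c B C y i)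
           (\<lambda>t. (\<Sum>t'\<in>{1..t} \<inter> tdom c B C k. y k t') *
                measure_pmf.expectation (p k) (\<lambda>s. real (min (c k s) t)) / real t)"
proof -
  let ?T = "t_dist c B C y" and ?r = "xbar c B C y k"
  define m where "m = (\<lambda>s t. real (min (c k s) t) / real t)"
  define g where "g = (\<lambda>s t. (if s \<noteq> 0 then m s t else 0) * measure_pmf.prob (?T k) {..t})"
  have "0 \<le> ?r"
    using assms(3) by (rule xbar_nonneg)
  have m_bounds: "0 \<le> m s t" "m s t \<le> 1" for s t
    by (auto simp: m_def divide_le_eq_1 simp del: of_nat_min)
  have g_bounded: "\<bar>g s t\<bar> \<le> 1" for s t
    using m_bounds[of s t] by (auto simp: g_def abs_mult intro: mult_le_one)
  have "measure_pmf.expectation (Pi_pmf UNIV 0 ?T) (deadline_share c i k s) =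
        measure_pmf.expectation (?T i) (g s)" for s
    using expectation_deadline_share_Pi_pmf[where T="?T" and c=c and s=s, OF assms(1)]
    unfolding g_def m_def by simp
  then have "measure_pmf.expectation (item_pmf (p k) ?r)
           (\<lambda>s. measure_pmf.expectation (Pi_pmf UNIV 0 ?T) (deadline_share c i k s)) =
        measure_pmf.expectation (?T i) (\<lambda>t. measure_pmf.expectation (item_pmf (p k) ?r) (\<lambda>s. g s t))"
    using expectation_swap_bounded[where K=1 and A="item_pmf (p k) ?r" and B="?T i" and f=g] g_bounded
    by simp
  also have "\<dots> = measure_pmf.expectation (?T i) (\<lambda>t. ?r * measure_pmf.expectation (p k) (\<lambda>s. g s t))"
  proof (rule Bochner_Integration.integral_cong[OF refl])
    fix t
    have "g 0 t = 0"
      by (simp add: g_def)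
    then show "measure_pmf.expectation (item_pmf (p k) ?r) (\<lambda>s. g s t) =
        ?r * measure_pmf.expectation (p k) (\<lambda>s. g s t)"
      using expectation_item_pmf[where K=1 and q="p k" and r="?r" and g="\<lambda>s. g s t"]
        g_bounded \<open>0 \<le> ?r\<close> assms(4)
      by simp
  qed
  also have "\<dots> = measure_pmf.expectation (?T i) (\<lambda>t. (?r * measure_pmf.prob (?T k) {..t}) *
                      measure_pmf.expectation (p k) (\<lambda>s. m s t))"
  proof (intro Bochner_Integration.integral_cong refl)
    fix t
    have "measure_pmf.expectation (p k) (\<lambda>s. g s t) =
          measure_pmf.expectation (p k) (\<lambda>s. m s t * measure_pmf.prob (?T k) {..t})"
      using assms(2) by (intro integral_cong_AE) (auto simp: g_def AE_measure_pmf_iff)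
    then show "?r * measure_pmf.expectation (p k) (\<lambda>s. g s t) =
        ?r * measure_pmf.prob (?T k) {..t} * measure_pmf.expectation (p k) (\<lambda>s. m s t)"
      by (simp add: mult_ac)
  qed
  finally show ?thesis
    using assms(3) by (simp add: xbar_mult_prob_t_dist_atMost m_def)
qed

lemma expectation_deadline_load_le:
  fixes p :: "'i::finite \<Rightarrow> nat pmf" and \<epsilon> :: real
  assumes "set_pmf (t_dist c B C y i) \<subseteq> {1..C}"
    and load: "\<forall>t\<in>{1..C}. (\<Sum>k\<in>UNIV. measure_pmf.expectation (p k) (\<lambda>s. real (min (c k s) t)) *
                 (\<Sum>t'\<in>{1..t} \<inter> tdom c B C k. y k t')) \<le> \<epsilon> * real t"
  shows "(\<Sum>k\<in>UNIV. measure_pmf.expectation (t_dist c B C y i) (\<lambda>t. (\<Sum>t'\<in>{1..t} \<inter> tdom c B C k. y k t') *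
           measure_pmf.expectation (p k) (\<lambda>s. real (min (c k s) t)) / real t)) \<le> \<epsilon>"
proof -
  let ?T = "t_dist c B C y i"
  define b where "b = (\<lambda>k t. (\<Sum>t'\<in>{1..t} \<inter> tdom c B C k. y k t') *
    measure_pmf.expectation (p k) (\<lambda>s. real (min (c k s) t)) / real t)"
  have "finite (set_pmf ?T)"
    using assms(1) by (rule finite_subset) simp
  then have "(\<Sum>k\<in>UNIV. measure_pmf.expectation ?T (b k)) = measure_pmf.expectation ?T (\<lambda>t. \<Sum>k\<in>UNIV. b k t)"
    by (intro Bochner_Integration.integral_sum[symmetric] integrable_measure_pmf_finite)
  also have "\<dots> \<le> \<epsilon>"
  proof (rule measure_pmf.integral_le_const)
    show "integrable ?T (\<lambda>t. \<Sum>k\<in>UNIV. b k t)"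
      using \<open>finite (set_pmf ?T)\<close> by (rule integrable_measure_pmf_finite)
    have "(\<Sum>k\<in>UNIV. b k t) \<le> \<epsilon>" if "t \<in> {1..C}" for t
    proof -
      have "(\<Sum>k\<in>UNIV. b k t) = (\<Sum>k\<in>UNIV. measure_pmf.expectation (p k) (\<lambda>s. real (min (c k s) t)) *
                 (\<Sum>t'\<in>{1..t} \<inter> tdom c B C k. y k t')) / real t"
        by (simp add: b_def sum_divide_distrib mult.commute)
      also have "\<dots> \<le> \<epsilon> * real t / real t"
        using load that by (intro divide_right_mono) auto
      finally show ?thesis
        using that by simp
    qed
    then show "AE t in ?T. (\<Sum>k\<in>UNIV. b k t) \<le> \<epsilon>"
      using assms(1) by (auto simp: AE_measure_pmf_iff)
  qed
  finally show ?thesis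
    by (simp add: b_def)
qed

lemma expectation_sum_deadline_share_le:
  fixes p :: "'i::finite \<Rightarrow> nat pmf" and i :: 'i and \<epsilon> :: real
  assumes supp: "\<And>k. 0 \<notin> set_pmf (p k)"
    and nonneg: "\<forall>k. \<forall>t\<in>tdom c B C k. 0 \<le> y k t"
    and le1: "\<forall>k. xbar c B C y k \<le> 1"
    and "set_pmf (t_dist c B C y i) \<subseteq> {1..C}"
    and load: "\<forall>t\<in>{1..C}. (\<Sum>k\<in>UNIV. measure_pmf.expectation (p k) (\<lambda>s. real (min (c k s) t)) *
                 (\<Sum>t'\<in>{1..t} \<inter> tdom c B C k. y k t')) \<le> \<epsilon> * real t"
  shows "(\<Sum>k\<in>UNIV - {i}. measure_pmf.expectation (Pi_pmf (UNIV - {i}) 0 (\<lambda>k. item_pmf (p k) (xbar c B C y k)))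
           (\<lambda>\<sigma>. measure_pmf.expectation (Pi_pmf UNIV 0 (t_dist c B C y)) (deadline_share c i k (\<sigma> k)))) \<le> \<epsilon>"
proof -
  let ?T = "t_dist c B C y"
  let ?h = "Pi_pmf (UNIV - {i}) 0 (\<lambda>k. item_pmf (p k) (xbar c B C y k))"
  define share where "share = (\<lambda>k s. measure_pmf.expectation (Pi_pmf UNIV 0 ?T) (deadline_share c i k s))"
  define b where "b = (\<lambda>k t. (\<Sum>t'\<in>{1..t} \<inter> tdom c B C k. y k t') *
    measure_pmf.expectation (p k) (\<lambda>s. real (min (c k s) t)) / real t)"
  have "(\<Sum>k\<in>UNIV - {i}. measure_pmf.expectation ?h (\<lambda>\<sigma>. share k (\<sigma> k))) =
        (\<Sum>k\<in>UNIV - {i}. measure_pmf.expectation (?T i) (b k))"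
  proof (rule sum.cong[OF refl])
    fix k assume "k \<in> UNIV - {i}"
    then have "measure_pmf.expectation ?h (\<lambda>\<sigma>. share k (\<sigma> k)) =
        measure_pmf.expectation (item_pmf (p k) (xbar c B C y k)) (share k)"
      by (intro expectation_Pi_pmf_component[where f="share k" and a=k]) simp_all
    also have "\<dots> = measure_pmf.expectation (?T i) (b k)"
      using expectation_deadline_share[of k i p c B C y] \<open>k \<in> UNIV - {i}\<close> supp nonneg le1
      by (simp add: share_def b_def)
    finally show "measure_pmf.expectation ?h (\<lambda>\<sigma>. share k (\<sigma> k)) = measure_pmf.expectation (?T i) (b k)" .
  qed
  also have "\<dots> \<le> (\<Sum>k\<in>UNIV. measure_pmf.expectation (?T i) (b k))"
  proof (intro sum_mono2 integral_nonneg_AE AE_I2)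
    fix k t
    have "0 \<le> (\<Sum>t'\<in>{1..t} \<inter> tdom c B C k. y k t')"
      using nonneg by (intro sum_nonneg) auto
    moreover have "0 \<le> measure_pmf.expectation (p k) (\<lambda>s. real (min (c k s) t))"
      by (rule integral_nonneg_AE) simp
    ultimately show "0 \<le> b k t"
      by (simp add: b_def)
  qed simp_all
  also have "\<dots> \<le> \<epsilon>"
    unfolding b_def using assms(4) load by (rule expectation_deadline_load_le)
  finally show ?thesis
    by (simp add: share_def)
qed

lemma expectation_prob_meets_deadline_ge:
  fixes p :: "'i::finite \<Rightarrow> nat pmf" and i :: 'i and \<epsilon> :: real
  assumes supp: "\<And>k. 0 \<notin> set_pmf (p k)"
    and nonneg: "\<forall>k. \<forall>t\<in>tdom c B C k. 0 \<le> y k t"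
    and le1: "\<forall>k. xbar c B C y k \<le> 1"
    and pos: "0 < xbar c B C y i"
    and load: "\<forall>t\<in>{1..C}. (\<Sum>k\<in>UNIV. measure_pmf.expectation (p k) (\<lambda>s. real (min (c k s) t)) *
                 (\<Sum>t'\<in>{1..t} \<inter> tdom c B C k. y k t')) \<le> \<epsilon> * real t"
  shows "1 - \<epsilon> \<le> measure_pmf.expectation (Pi_pmf (UNIV - {i}) 0 (\<lambda>k. item_pmf (p k) (xbar c B C y k)))
           (\<lambda>\<sigma>. measure_pmf.prob (Pi_pmf UNIV 0 (t_dist c B C y)) {tt. meets_deadline c (\<sigma>(i := j)) i tt})"
proof -
  let ?T = "t_dist c B C y"
  let ?h = "Pi_pmf (UNIV - {i}) 0 (\<lambda>k. item_pmf (p k) (xbar c B C y k))"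
  define share where "share = (\<lambda>k s. measure_pmf.expectation (Pi_pmf UNIV 0 ?T) (deadline_share c i k s))"
  have int: "integrable ?h (\<lambda>\<sigma>. share k (\<sigma> k))" for k
    unfolding share_def using deadline_share_bounds[of c i k]
    by (intro integrable_measure_pmf_bounded[where K=1] abs_expectation_le) (simp add: abs_le_iff)
  have "set_pmf (?T i) \<subseteq> {1..C}"
    using set_pmf_t_dist_subset[OF pos] nonneg by (auto simp: tdom_def subset_iff)
  have "(\<Sum>k\<in>UNIV - {i}. measure_pmf.expectation ?h (\<lambda>\<sigma>. share k (\<sigma> k))) \<le> \<epsilon>"
    unfolding share_def using supp nonneg le1 \<open>set_pmf (?T i) \<subseteq> {1..C}\<close> load
    by (rule expectation_sum_deadline_share_le)
  then have "1 - \<epsilon> \<le> measure_pmf.expectation ?h (\<lambda>_. 1) -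
      measure_pmf.expectation ?h (\<lambda>\<sigma>. \<Sum>k\<in>UNIV - {i}. share k (\<sigma> k))"
    using int by (subst Bochner_Integration.integral_sum) simp_all
  also have "\<dots> = measure_pmf.expectation ?h (\<lambda>\<sigma>. 1 - (\<Sum>k\<in>UNIV - {i}. share k (\<sigma> k)))"
    using int by (intro Bochner_Integration.integral_diff[symmetric] Bochner_Integration.integrable_sum) simp_all
  also have "\<dots> \<le> measure_pmf.expectation ?h
      (\<lambda>\<sigma>. measure_pmf.prob (Pi_pmf UNIV 0 ?T) {tt. meets_deadline c (\<sigma>(i := j)) i tt})"
  proof (rule integral_mono)
    show "integrable ?h (\<lambda>\<sigma>. 1 - (\<Sum>k\<in>UNIV - {i}. share k (\<sigma> k)))"
      using int by (intro Bochner_Integration.integrable_diff Bochner_Integration.integrable_sum) simp_all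
    show "integrable ?h (\<lambda>\<sigma>. measure_pmf.prob (Pi_pmf UNIV 0 ?T) {tt. meets_deadline c (\<sigma>(i := j)) i tt})"
      by (rule integrable_measure_pmf_bounded[where K=1]) simp
    have "0 \<notin> set_pmf (?T i)"
      using \<open>set_pmf (?T i) \<subseteq> {1..C}\<close> by auto
    show "1 - (\<Sum>k\<in>UNIV - {i}. share k (\<sigma> k)) \<le>
        measure_pmf.prob (Pi_pmf UNIV 0 ?T) {tt. meets_deadline c (\<sigma>(i := j)) i tt}" for \<sigma>
      using prob_meets_deadline_ge[where T="?T" and i=i and c=c and v="\<sigma>(i := j)", OF \<open>0 \<notin> set_pmf (?T i)\<close>]
      by (simp add: share_def)
  qed
  finally show ?thesis .
qed

section \<open>The scheme psi_c\<close>

(* the guarantee of the balanced CRS only depends on whether i is active, so it survives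
   conditioning on the state v i = j *)
lemma expectation_prob_chi_accepts_ge:
  fixes p :: "'i::finite \<Rightarrow> nat pmf" and X :: "'i set \<Rightarrow> 'i set pmf"
  assumes supp: "\<And>k. 0 \<notin> set_pmf (p k)"
    and r: "\<And>k. 0 \<le> r k" "\<And>k. r k \<le> 1" "0 < r i"
    and guar: "\<gamma> * measure_pmf.prob (rand_set r) {R. i \<in> R} \<le>
      measure_pmf.prob (bind_pmf (rand_set r) (\<lambda>R. map_pmf (\<lambda>S. (R, S)) (X R))) {(R, S). i \<in> R \<and> i \<in> S}"
    and "j \<noteq> 0"
  shows "\<gamma> \<le> measure_pmf.expectation (Pi_pmf (UNIV - {i}) 0 (\<lambda>k. item_pmf (p k) (r k)))
              (\<lambda>\<sigma>. measure_pmf.prob (X (Rv (\<sigma>(i := j)))) {S. i \<in> S})"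
proof -
  let ?E = "measure_pmf.expectation (Pi_pmf (UNIV - {i}) 0 (\<lambda>k. item_pmf (p k) (r k)))
              (\<lambda>\<sigma>. measure_pmf.prob (X (Rv (\<sigma>(i := j)))) {S. i \<in> S})"
  have rs: "rand_set r = map_pmf Rv (h_dist p r)"
    using assms by (intro rand_set_eq_map_Rv)
  have Rv_upd: "Rv (\<sigma>(i := y)) = Rv (\<sigma>(i := j))" if "y \<noteq> 0" for \<sigma> :: "'i \<Rightarrow> nat" and y
    using that \<open>j \<noteq> 0\<close> by (auto simp: Rv_def)
  have "measure_pmf.prob (bind_pmf (rand_set r) (\<lambda>R. map_pmf (\<lambda>S. (R, S)) (X R))) {(R, S). i \<in> R \<and> i \<in> S} =
      measure_pmf.expectation (h_dist p r) (\<lambda>v. if v i \<noteq> 0 then measure_pmf.prob (X (Rv v)) {S. i \<in> S} else 0)"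
    unfolding rs prob_bind_pmf integral_map_pmf
    by (intro Bochner_Integration.integral_cong) (auto simp: measure_map_pmf vimage_def Rv_def)
  also have "\<dots> = measure_pmf.prob (item_pmf (p i) (r i)) {y. y \<noteq> 0} * ?E"
    unfolding h_dist_eq_Pi_item_pmf
    by (rule expectation_Pi_pmf_condition_component[where K=1]) (simp_all add: Rv_upd)
  also have "measure_pmf.prob (item_pmf (p i) (r i)) {y. y \<noteq> 0} = r i"
    using assms by (intro prob_item_pmf_nonzero)
  finally have "\<gamma> * r i \<le> r i * ?E"
    using guar prob_h_dist_component[of p r "\<lambda>y. y \<noteq> 0" i] prob_item_pmf_nonzero[of "p i" "r i"] assms
    by (simp add: rs vimage_def Rv_def)
  then show ?thesis
    using \<open>0 < r i\<close> by (simp add: mult.commute)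
qed

lemma set_pmf_Pi_item_pmf_le:
  fixes p :: "'i \<Rightarrow> nat pmf"
  assumes "finite A" "\<forall>k. set_pmf (p k) \<subseteq> {1..B}" "\<sigma> \<in> set_pmf (Pi_pmf A 0 (\<lambda>k. item_pmf (p k) (r k)))"
  shows "\<sigma> k \<le> B"
proof (cases "k \<in> A")
  case True
  then have "\<sigma> k \<in> set_pmf (item_pmf (p k) (r k))"
    using assms(1,3) by (auto simp: set_Pi_pmf PiE_dflt_def)
  then show ?thesis
    using assms(2) set_pmf_item_pmf_subset[of "p k" "r k"] by fastforce
next
  case False
  then show ?thesis
    using assms(1,3) by (auto simp: set_Pi_pmf PiE_dflt_def)
qed

(* c is only known to be monotone on the states 1..B, hence the states are capped at B *)
lemma antimono_prob_meets_deadline_capped: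
  fixes T :: "'i::finite \<Rightarrow> nat pmf"
  assumes cmono: "\<forall>i. \<forall>s\<in>{1..B}. \<forall>s'\<in>{1..B}. s' \<le> s \<longrightarrow> c i s' \<le> c i s"
    and "j \<le> B"
  shows "antimono (\<lambda>\<sigma>. measure_pmf.prob (Pi_pmf UNIV 0 T)
           {tt. meets_deadline c ((\<lambda>k. min (\<sigma> k) B)(i := j)) i tt})"
proof (rule antimonoI)
  fix \<sigma> \<tau> :: "'i \<Rightarrow> nat" assume "\<sigma> \<le> \<tau>"
  then have "(\<lambda>k. min (\<sigma> k) B)(i := j) \<le> (\<lambda>k. min (\<tau> k) B)(i := j)"
    using le_funD[OF \<open>\<sigma> \<le> \<tau>\<close>] by (auto simp: le_fun_def min_le_iff_disj)
  moreover have "((\<lambda>k. min (\<tau> k) B)(i := j)) k \<le> B" for k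
    using \<open>j \<le> B\<close> by simp
  ultimately have "{tt. meets_deadline c ((\<lambda>k. min (\<tau> k) B)(i := j)) i tt} \<subseteq>
                   {tt. meets_deadline c ((\<lambda>k. min (\<sigma> k) B)(i := j)) i tt}"
    by (auto intro: meets_deadline_antimono[OF cmono])
  then show "measure_pmf.prob (Pi_pmf UNIV 0 T) {tt. meets_deadline c ((\<lambda>k. min (\<tau> k) B)(i := j)) i tt} \<le>
             measure_pmf.prob (Pi_pmf UNIV 0 T) {tt. meets_deadline c ((\<lambda>k. min (\<sigma> k) B)(i := j)) i tt}"
    by (rule measure_pmf.finite_measure_mono) simp
qed

lemma harris_psi_c_factors:
  fixes p :: "'i::finite \<Rightarrow> nat pmf" and X :: "'i set \<Rightarrow> 'i set pmf" and T :: "'i \<Rightarrow> nat pmf"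
    and r :: "'i \<Rightarrow> real"
  assumes supp: "\<forall>k. set_pmf (p k) \<subseteq> {1..B}"
    and cmono: "\<forall>i. \<forall>s\<in>{1..B}. \<forall>s'\<in>{1..B}. s' \<le> s \<longrightarrow> c i s' \<le> c i s"
    and mon: "\<forall>R R'. i \<in> R \<and> R \<subseteq> R' \<longrightarrow>
                measure_pmf.prob (X R') {S. i \<in> S} \<le> measure_pmf.prob (X R) {S. i \<in> S}"
    and j: "j \<in> {1..B}"
  defines "h \<equiv> Pi_pmf (UNIV - {i}) 0 (\<lambda>k. item_pmf (p k) (r k))"
    and "qa \<equiv> \<lambda>\<sigma>. measure_pmf.prob (X (Rv (\<sigma>(i := j)))) {S. i \<in> S}"
    and "qb \<equiv> \<lambda>\<sigma>. measure_pmf.prob (Pi_pmf UNIV 0 T) {tt. meets_deadline c (\<sigma>(i := j)) i tt}"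
  shows "measure_pmf.expectation h qa * measure_pmf.expectation h qb \<le>
         measure_pmf.expectation h (\<lambda>\<sigma>. qa \<sigma> * qb \<sigma>)"
proof -
  define cap where "cap \<sigma> = (\<lambda>k. min (\<sigma> k) B)" for \<sigma> :: "'i \<Rightarrow> nat"
  have "AE \<sigma> in h. qb (cap \<sigma>) = qb \<sigma>"
    using set_pmf_Pi_item_pmf_le[OF _ supp] unfolding h_def
    by (auto simp: AE_measure_pmf_iff cap_def min_absorb1)
  then have cap_eq: "measure_pmf.expectation h (\<lambda>\<sigma>. qb (cap \<sigma>)) = measure_pmf.expectation h qb"
      "measure_pmf.expectation h (\<lambda>\<sigma>. qa \<sigma> * qb (cap \<sigma>)) = measure_pmf.expectation h (\<lambda>\<sigma>. qa \<sigma> * qb \<sigma>)"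
    by (auto intro!: integral_cong_AE elim: eventually_mono)
  have "antimono qa"
  proof (rule antimonoI)
    fix \<sigma> \<tau> :: "'i \<Rightarrow> nat" assume "\<sigma> \<le> \<tau>"
    then have "Rv (\<sigma>(i := j)) \<subseteq> Rv (\<tau>(i := j))"
      by (intro Rv_mono) (simp add: le_fun_def)
    then show "qa \<tau> \<le> qa \<sigma>"
      using mon j by (auto simp: qa_def Rv_def)
  qed
  moreover have "antimono (\<lambda>\<sigma>. qb (cap \<sigma>))"
    unfolding qb_def cap_def using cmono j by (intro antimono_prob_meets_deadline_capped) auto
  ultimately have "measure_pmf.expectation h qa * measure_pmf.expectation h (\<lambda>\<sigma>. qb (cap \<sigma>)) \<le>
         measure_pmf.expectation h (\<lambda>\<sigma>. qa \<sigma> * qb (cap \<sigma>))"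
    unfolding h_def by (intro harris_inequality_Pi_pmf[where K=1]) (simp_all add: qa_def qb_def)
  then show ?thesis
    by (simp only: cap_eq)
qed

lemma prob_psi_c_selects:
  fixes p :: "'i::finite \<Rightarrow> nat pmf"
  assumes "j \<noteq> 0"
  shows "measure_pmf.prob (bind_pmf (h_dist p (xbar c B C y)) (\<lambda>v. map_pmf (\<lambda>w. (v, w)) (psi_c chi c B C y v)))
      {(v, w). v i = j \<and> w i = j} =
    pmf (item_pmf (p i) (xbar c B C y i)) j *
    measure_pmf.expectation (Pi_pmf (UNIV - {i}) 0 (\<lambda>k. item_pmf (p k) (xbar c B C y k)))
      (\<lambda>\<sigma>. measure_pmf.prob (chi (xbar c B C y) (Rv (\<sigma>(i := j)))) {S. i \<in> S} *
           measure_pmf.prob (Pi_pmf UNIV 0 (t_dist c B C y)) {tt. meets_deadline c (\<sigma>(i := j)) i tt})"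
proof -
  let ?r = "xbar c B C y"
  have "measure_pmf.prob (bind_pmf (h_dist p ?r) (\<lambda>v. map_pmf (\<lambda>w. (v, w)) (psi_c chi c B C y v)))
      {(v, w). v i = j \<and> w i = j} =
    measure_pmf.expectation (h_dist p ?r) (\<lambda>v. if v i = j then
      measure_pmf.prob (chi ?r (Rv v)) {S. i \<in> S} *
      measure_pmf.prob (Pi_pmf UNIV 0 (t_dist c B C y)) {tt. meets_deadline c v i tt} else 0)"
    unfolding prob_bind_pmf using assms
    by (intro Bochner_Integration.integral_cong) (auto simp: measure_map_pmf vimage_def prob_psi_c_keeps)
  also have "\<dots> = measure_pmf.prob (item_pmf (p i) (?r i)) {y. y = j} *
    measure_pmf.expectation (Pi_pmf (UNIV - {i}) 0 (\<lambda>k. item_pmf (p k) (?r k)))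
      (\<lambda>\<sigma>. measure_pmf.prob (chi ?r (Rv (\<sigma>(i := j)))) {S. i \<in> S} *
           measure_pmf.prob (Pi_pmf UNIV 0 (t_dist c B C y)) {tt. meets_deadline c (\<sigma>(i := j)) i tt})"
    unfolding h_dist_eq_Pi_item_pmf
    by (rule expectation_Pi_pmf_condition_component[where K=1]) (simp_all add: abs_mult mult_le_one)
  finally show ?thesis
    by (simp add: measure_pmf_single)
qed

lemma psi_c_selection_prob_ge:
  fixes p :: "'i::finite \<Rightarrow> nat pmf" and chi :: "('i \<Rightarrow> real) \<Rightarrow> 'i set \<Rightarrow> 'i set pmf"
    and \<gamma> \<epsilon> :: real
  assumes supp: "\<forall>k. set_pmf (p k) \<subseteq> {1..B}"
    and cmono: "\<forall>i. \<forall>s\<in>{1..B}. \<forall>s'\<in>{1..B}. s' \<le> s \<longrightarrow> c i s' \<le> c i s"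
    and nonneg: "\<forall>k. \<forall>t\<in>tdom c B C k. 0 \<le> y k t"
    and le1: "\<forall>k. xbar c B C y k \<le> 1"
    and load: "\<forall>t\<in>{1..C}. (\<Sum>k\<in>UNIV. measure_pmf.expectation (p k) (\<lambda>s. real (min (c k s) t)) *
                 (\<Sum>t'\<in>{1..t} \<inter> tdom c B C k. y k t')) \<le> \<epsilon> * real t"
    and guar: "\<gamma> * measure_pmf.prob (rand_set (xbar c B C y)) {R. i \<in> R} \<le>
      measure_pmf.prob (bind_pmf (rand_set (xbar c B C y))
        (\<lambda>R. map_pmf (\<lambda>S. (R, S)) (chi (xbar c B C y) R))) {(R, S). i \<in> R \<and> i \<in> S}"
    and mon: "\<forall>R R'. i \<in> R \<and> R \<subseteq> R' \<longrightarrow>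
      measure_pmf.prob (chi (xbar c B C y) R') {S. i \<in> S} \<le> measure_pmf.prob (chi (xbar c B C y) R) {S. i \<in> S}"
    and "0 \<le> \<gamma>" "\<epsilon> \<le> 1" and j: "j \<in> {1..B}"
  shows "\<gamma> * (1 - \<epsilon>) * measure_pmf.prob (h_dist p (xbar c B C y)) {v. v i = j} \<le>
    measure_pmf.prob (bind_pmf (h_dist p (xbar c B C y)) (\<lambda>v. map_pmf (\<lambda>w. (v, w)) (psi_c chi c B C y v)))
      {(v, w). v i = j \<and> w i = j}"
proof -
  let ?r = "xbar c B C y"
  let ?h = "Pi_pmf (UNIV - {i}) 0 (\<lambda>k. item_pmf (p k) (?r k))"
  let ?pj = "pmf (item_pmf (p i) (?r i)) j"
  define qa where "qa = (\<lambda>\<sigma>. measure_pmf.prob (chi ?r (Rv (\<sigma>(i := j)))) {S. i \<in> S})"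
  define qb where "qb = (\<lambda>\<sigma>. measure_pmf.prob (Pi_pmf UNIV 0 (t_dist c B C y))
                            {tt. meets_deadline c (\<sigma>(i := j)) i tt})"
  have lhs: "measure_pmf.prob (h_dist p ?r) {v. v i = j} = ?pj"
    using prob_h_dist_component[of p ?r "\<lambda>y. y = j" i] by (simp add: measure_pmf_single)
  have rhs: "measure_pmf.prob (bind_pmf (h_dist p ?r) (\<lambda>v. map_pmf (\<lambda>w. (v, w)) (psi_c chi c B C y v)))
      {(v, w). v i = j \<and> w i = j} = ?pj * measure_pmf.expectation ?h (\<lambda>\<sigma>. qa \<sigma> * qb \<sigma>)"
    unfolding qa_def qb_def using j by (intro prob_psi_c_selects) simp
  have supp0: "0 \<notin> set_pmf (p k)" for k
    using subsetD[OF spec[OF supp, of k]] by force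
  have r: "0 \<le> ?r k" "?r k \<le> 1" for k
    using nonneg le1 by (auto intro: xbar_nonneg)
  show ?thesis
  proof (cases "?pj = 0")
    case True
    then show ?thesis
      by (simp add: lhs rhs)
  next
    case False
    then have "0 < ?r i"
      using r[of i] j pmf_item_pmf_nonzero[of "?r i" j "p i"] by fastforce
    have "\<gamma> \<le> measure_pmf.expectation ?h qa"
      unfolding qa_def using supp0 r \<open>0 < ?r i\<close> guar j by (intro expectation_prob_chi_accepts_ge) auto
    moreover have "1 - \<epsilon> \<le> measure_pmf.expectation ?h qb"
      unfolding qb_def using supp0 nonneg le1 \<open>0 < ?r i\<close> load by (rule expectation_prob_meets_deadline_ge)
    ultimately have "\<gamma> * (1 - \<epsilon>) \<le> measure_pmf.expectation ?h qa * measure_pmf.expectation ?h qb"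
      using \<open>0 \<le> \<gamma>\<close> \<open>\<epsilon> \<le> 1\<close> by (intro mult_mono) auto
    also have "\<dots> \<le> measure_pmf.expectation ?h (\<lambda>\<sigma>. qa \<sigma> * qb \<sigma>)"
      unfolding qa_def qb_def using supp cmono mon j by (rule harris_psi_c_factors)
    finally have "\<gamma> * (1 - \<epsilon>) \<le> measure_pmf.expectation ?h (\<lambda>\<sigma>. qa \<sigma> * qb \<sigma>)" .
    from mult_left_mono[OF this pmf_nonneg[of "item_pmf (p i) (?r i)" j]] show ?thesis
      unfolding lhs rhs by (simp add: mult.commute)
  qed
qed

lemma is_CRS_psi_c:
  fixes p :: "'i::finite \<Rightarrow> nat pmf" and chi :: "('i \<Rightarrow> real) \<Rightarrow> 'i set \<Rightarrow> 'i set pmf"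
  assumes supp: "\<forall>k. set_pmf (p k) \<subseteq> {1..B}"
    and cmono: "\<forall>i. \<forall>s\<in>{1..B}. \<forall>s'\<in>{1..B}. s' \<le> s \<longrightarrow> c i s' \<le> c i s"
    and nonneg: "\<forall>k. \<forall>t\<in>tdom c B C k. 0 \<le> y k t"
    and le1: "\<forall>k. xbar c B C y k \<le> 1"
    and load: "\<forall>t\<in>{1..C}. (\<Sum>k\<in>UNIV. measure_pmf.expectation (p k) (\<lambda>s. real (min (c k s) t)) *
                 (\<Sum>t'\<in>{1..t} \<inter> tdom c B C k. y k t')) \<le> \<epsilon> * real t"
    and "balanced_CRS F \<beta> \<gamma> chi" "xbar c B C y \<in> scaled_polytope \<beta> F"
    and "0 \<le> \<gamma>" "\<epsilon> \<le> 1"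
  shows "is_CRS B (h_dist p (xbar c B C y)) (psi_c chi c B C y) (\<gamma> * (1 - \<epsilon>))"
  unfolding is_CRS_def
proof (intro conjI ballI allI)
  fix v w i assume "w \<in> set_pmf (psi_c chi c B C y v)"
  then show "w i = 0 \<or> w i = v i"
    by (auto simp: psi_c_def)
next
  fix i j assume "j \<in> {1..B}"
  with assms show "\<gamma> * (1 - \<epsilon>) * measure_pmf.prob (h_dist p (xbar c B C y)) {v. v i = j} \<le>
    measure_pmf.prob (bind_pmf (h_dist p (xbar c B C y)) (\<lambda>v. map_pmf (\<lambda>w. (v, w)) (psi_c chi c B C y v)))
      {(v, w). v i = j \<and> w i = j}"
    by (intro psi_c_selection_prob_ge) (auto simp: balanced_CRS_def)
qed

lemma monotone_CRS_psi_c: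
  fixes chi :: "('i::finite \<Rightarrow> real) \<Rightarrow> 'i set \<Rightarrow> 'i set pmf"
  assumes cmono: "\<forall>i. \<forall>s\<in>{1..B}. \<forall>s'\<in>{1..B}. s' \<le> s \<longrightarrow> c i s' \<le> c i s"
    and "balanced_CRS F \<beta> \<gamma> chi" "xbar c B C y \<in> scaled_polytope \<beta> F"
  shows "monotone_CRS B (psi_c chi c B C y)"
  unfolding monotone_CRS_def
proof (intro ballI allI impI)
  fix u w :: "'i \<Rightarrow> nat" and i
  assume "w \<in> states0 B" and uw: "u i = w i \<and> u \<le> w"
  show "measure_pmf.prob (psi_c chi c B C y w) {x. x i = w i} \<le>
        measure_pmf.prob (psi_c chi c B C y u) {x. x i = u i}"
  proof (cases "u i = 0")
    case True
    then have "measure_pmf.prob (psi_c chi c B C y u) {x. x i = u i} = 1"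
      by (subst measure_pmf.prob_eq_1) (auto simp: AE_measure_pmf_iff psi_c_def)
    then show ?thesis
      by simp
  next
    case False
    have "Rv u \<subseteq> Rv w"
      using uw by (intro Rv_mono) simp
    moreover have "i \<in> Rv u"
      using False by (simp add: Rv_def)
    ultimately have chi_le: "measure_pmf.prob (chi (xbar c B C y) (Rv w)) {S. i \<in> S} \<le>
        measure_pmf.prob (chi (xbar c B C y) (Rv u)) {S. i \<in> S}"
      using assms(2,3) unfolding balanced_CRS_def by blast
    have "{tt. meets_deadline c w i tt} \<subseteq> {tt. meets_deadline c u i tt}"
      using uw \<open>w \<in> states0 B\<close> by (auto simp: states0_def intro: meets_deadline_antimono[OF cmono])
    then have deadline_le: "measure_pmf.prob (Pi_pmf UNIV 0 (t_dist c B C y)) {tt. meets_deadline c w i tt} \<le>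
        measure_pmf.prob (Pi_pmf UNIV 0 (t_dist c B C y)) {tt. meets_deadline c u i tt}"
      by (rule measure_pmf.finite_measure_mono) simp
    show ?thesis
      using prob_psi_c_keeps[of u i] prob_psi_c_keeps[of w i] False uw
      by (simp add: mult_mono chi_le deadline_le)
  qed
qed

lemma scaled_polytope_mem:
  fixes F :: "'i::finite set set"
  assumes "downward_closed F" "z \<in> polytope F" "0 \<le> l" "l \<le> \<beta>"
  shows "(\<lambda>k. l * z k) \<in> scaled_polytope \<beta> F"
proof (cases "\<beta> = 0")
  case True
  then show ?thesis
    using assms by (auto simp: scaled_polytope_def)
next
  case False
  then have "0 < \<beta>"
    using assms by simp
  obtain lam where lam: "\<forall>S\<in>F. 0 \<le> lam S" "(\<Sum>S\<in>F. lam S) = 1" "\<forall>i. z i = (\<Sum>S\<in>F. lam S * indicator S i)"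
    using assms(2) unfolding polytope_def by blast
  then obtain S0 where "S0 \<in> F"
    by fastforce
  then have "{} \<in> F"
    using assms(1) unfolding downward_closed_def by blast
  define r where "r = l / \<beta>"
  have r: "0 \<le> r" "r \<le> 1"
    using assms(3,4) \<open>0 < \<beta>\<close> by (auto simp: r_def)
  (* the missing mass 1 - r goes to the empty set, which lies in F by downward closure *)
  define lam' where "lam' S = r * lam S + (if S = {} then 1 - r else 0)" for S
  have "(\<Sum>S\<in>F. lam' S) = 1"
    using lam(2) \<open>{} \<in> F\<close> by (simp add: lam'_def sum.distrib sum_distrib_left[symmetric])
  moreover have "r * z i = (\<Sum>S\<in>F. lam' S * indicator S i)" for i
  proof -
    have "(\<Sum>S\<in>F. lam' S * indicator S i) = r * (\<Sum>S\<in>F. lam S * indicator S i) +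
            (\<Sum>S\<in>F. (if S = {} then 1 - r else 0) * indicator S i)"
      by (simp only: lam'_def distrib_right sum.distrib sum_distrib_left mult.assoc)
    also have "(\<Sum>S\<in>F. (if S = {} then 1 - r else 0) * indicator S i) = 0"
      by (rule sum.neutral) auto
    finally show ?thesis
      using lam(3) by simp
  qed
  ultimately have "(\<lambda>k. r * z k) \<in> polytope F"
    using lam(1) r unfolding polytope_def by (auto simp: lam'_def intro!: exI[of _ lam'])
  moreover have "l * z k = \<beta> * (r * z k)" for k
    using \<open>0 < \<beta>\<close> by (simp add: r_def)
  ultimately show ?thesis
    unfolding scaled_polytope_def by (intro CollectI bexI[of _ "\<lambda>k. r * z k"]) auto
qed

lemma P1_feasible_scaled:
  assumes "P1_feasible p c B C F x" "\<forall>i t. y i t = l * x i t" "0 \<le> l" "l \<le> 1"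
  shows "\<forall>k. \<forall>t\<in>tdom c B C k. 0 \<le> y k t"
    and "xbar c B C y = (\<lambda>k. l * xbar c B C x k)"
    and "\<forall>k. xbar c B C y k \<le> 1"
    and "\<forall>t\<in>{1..C}. (\<Sum>k\<in>UNIV. measure_pmf.expectation (p k) (\<lambda>s. real (min (c k s) t)) *
           (\<Sum>t'\<in>{1..t} \<inter> tdom c B C k. y k t')) \<le> 2 * l * real t"
proof -
  have x: "\<forall>k. \<forall>t\<in>tdom c B C k. 0 \<le> x k t" "\<forall>k. xbar c B C x k \<le> 1"
    and load: "\<forall>t\<in>{1..C}. (\<Sum>k\<in>UNIV. measure_pmf.expectation (p k) (\<lambda>s. real (min (c k s) t)) *
           (\<Sum>t'\<in>{1..t} \<inter> tdom c B C k. x k t')) \<le> 2 * real t"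
    using assms(1) unfolding P1_feasible_def by auto
  show "\<forall>k. \<forall>t\<in>tdom c B C k. 0 \<le> y k t"
    using x(1) assms(2,3) by simp
  show xbar_y: "xbar c B C y = (\<lambda>k. l * xbar c B C x k)"
    using assms(2) by (simp add: fun_eq_iff xbar_def sum_distrib_left)
  show "\<forall>k. xbar c B C y k \<le> 1"
    using x assms(3,4) by (auto simp: xbar_y intro: mult_le_one xbar_nonneg)
  show "\<forall>t\<in>{1..C}. (\<Sum>k\<in>UNIV. measure_pmf.expectation (p k) (\<lambda>s. real (min (c k s) t)) *
           (\<Sum>t'\<in>{1..t} \<inter> tdom c B C k. y k t')) \<le> 2 * l * real t"
    using load assms(2,3)
    by (auto simp: sum_distrib_left[symmetric] mult.left_commute mult.assoc intro: mult_left_mono)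
qed

theorem lemma5:
  fixes p :: "'i::finite \<Rightarrow> nat pmf"
    and c :: "'i \<Rightarrow> nat \<Rightarrow> nat"
    and B C :: nat
    and F :: "'i set set"
    and \<beta> \<gamma> :: real
    and chi :: "('i \<Rightarrow> real) \<Rightarrow> 'i set \<Rightarrow> 'i set pmf"
    and y :: "'i \<Rightarrow> nat \<Rightarrow> real"
  assumes "B \<ge> 1" and "C \<ge> 1"
    and "\<forall>i. set_pmf (p i) \<subseteq> {1..B}"
    and "\<forall>i. \<forall>s\<in>{1..B}. \<forall>s'\<in>{1..B}. s' \<le> s \<longrightarrow> c i s' \<le> c i s"
    and "downward_closed F"
    and "0 \<le> \<beta>" "\<beta> \<le> 1" "0 \<le> \<gamma>" "\<gamma> \<le> 1"
    and "balanced_CRS F \<beta> \<gamma> chi"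
    and "\<exists>x. P1_feasible p c B C F x \<and> (\<forall>i t. y i t = min \<beta> (1/4) * x i t)"
  shows "is_CRS B (h_dist p (xbar c B C y)) (psi_c chi c B C y) ((1 - min (2 * \<beta>) (1/2)) * \<gamma>)
       \<and> monotone_CRS B (psi_c chi c B C y)"
proof -
  define l where "l = min \<beta> (1/4)"
  obtain x where x: "P1_feasible p c B C F x" "\<forall>i t. y i t = l * x i t"
    using assms(11) unfolding l_def by blast
  have l: "0 \<le> l" "l \<le> 1" "l \<le> 1/4" "l \<le> \<beta>"
    using \<open>0 \<le> \<beta>\<close> by (auto simp: l_def)
  note y = P1_feasible_scaled[OF x l(1,2)]
  have "xbar c B C x \<in> polytope F"
    using x(1) by (simp add: P1_feasible_def)
  have "xbar c B C y \<in> scaled_polytope \<beta> F"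
    unfolding y(2) using assms(5) \<open>xbar c B C x \<in> polytope F\<close> l(1,4) by (rule scaled_polytope_mem)
  then have "is_CRS B (h_dist p (xbar c B C y)) (psi_c chi c B C y) (\<gamma> * (1 - 2 * l))"
    using assms(3,4,8,10) y(1,3,4) l by (intro is_CRS_psi_c) auto
  moreover have "monotone_CRS B (psi_c chi c B C y)"
    using assms(4,10) \<open>xbar c B C y \<in> scaled_polytope \<beta> F\<close> by (rule monotone_CRS_psi_c)
  moreover have "(1 - min (2 * \<beta>) (1/2)) * \<gamma> = \<gamma> * (1 - 2 * l)"
    by (simp add: l_def min_def)
  ultimately show ?thesis
    by (simp only:)
qed

end
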